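(* Let $0<\delta_0<\pi/2$. Then $G(r,t)<\ln(7/6)$ for all $r\in[0,\pi+\delta_0)$ and all $t\ge0$. More precisely, $G(r,t)<\ln\bigl(\tfrac{2r_M\sin r_M}{\pi}\bigr)<\ln(7/6)$, where $r_M\in(\pi/2,\pi)$ is the solution of $r_M=-\tan r_M$.
   Context: Let $f(r)=-\dfrac{r\cos r\sin r}{r+\cos r\sin r}$ and $g(r)=-\dfrac{\cos r\,(r\cos r+\sin r)}{r+\cos r\sin r}$ (extended continuously at $r=0$). Let $F(r,t)$ denote the flow of the one-dimensional vector field $f(r)\partial_r$, i.e.\ the solution of $\partial_tF(r,t)=f(F(r,t))$, $F(r,0)=r$. Define $G(r,t)=\int_0^t g(F(r,s))\,ds$. *)

theory Defs
  imports "HOL-Analysis.Analysis"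
begin

text \<open>The vector field coefficient f, extended continuously at 0 (value 0).\<close>
definition f_vf :: "real \<Rightarrow> real" where
  "f_vf r = (if r = 0 then 0 else - (r * cos r * sin r) / (r + cos r * sin r))"

text \<open>The function g, extended continuously at 0 (value -1).\<close>
definition g_fn :: "real \<Rightarrow> real" where
  "g_fn r = (if r = 0 then -1 else - (cos r * (r * cos r + sin r)) / (r + cos r * sin r))"

text \<open>The flow F of f: F r is the (unique, global) solution of the ODE
  phi' = f(phi) with phi 0 = r.\<close>
definition flow_F :: "real \<Rightarrow> real \<Rightarrow> real" where
  "flow_F r t = (THE phi. phi 0 = r \<and>
      (\<forall>s. (phi has_real_derivative f_vf (phi s)) (at s))) t"

definition G_fn :: "real \<Rightarrow> real \<Rightarrow> real" where
  "G_fn r t = integral {0..t} (\<lambda>s. g_fn (flow_F r s))"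

definition r_M :: real where
  "r_M = (THE x. x \<in> {pi/2<..<pi} \<and> x = - tan x)"

end

theory Submission
  imports Defs
begin

text \<open>Since \<open>(x sin x)' = sin x + x cos x\<close>, along the flow \<open>d/dt ln |F sin F| = g(F)\<close>, so
  \<open>G(r,t) = ln (F(r,t) sin F(r,t) / (r sin r))\<close>. The zeros \<open>0, pi/2, pi, 3pi/2\<close> of \<open>f\<close> are
  equilibria (there \<open>G = t g(r) \<le> 0\<close>), and between them the flow is trapped and monotone. On
  \<open>(0, pi/2)\<close> and \<open>(pi, 3pi/2)\<close> it moves so that \<open>|x sin x|\<close> decreases, whence \<open>G \<le> 0\<close>. On
  \<open>(pi/2, pi)\<close> it increases; \<open>x sin x\<close> is bounded by its maximum \<open>r_M sin r_M\<close> and either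
  \<open>r \<le> r_M\<close>, where \<open>r sin r > pi/2\<close>, or \<open>r > r_M\<close>, where \<open>x sin x\<close> decreases. Finally
  \<open>(r_M sin r_M)\<^sup>2 = r_M\<^sup>4 / (1 + r_M\<^sup>2)\<close> and \<open>r_M < 2.035\<close> give \<open>2 r_M sin r_M / pi < 7/6\<close>.\<close>

section \<open>The sinc function\<close>

definition sinc :: "real \<Rightarrow> real" where
  "sinc x = (if x = 0 then 1 else sin x / x)"

lemma sinc_minus [simp]: "sinc (- x) = sinc x"
  by (simp add: sinc_def)

lemma sinc_abs: "sinc \<bar>x\<bar> = sinc x"
  by (cases "0 \<le> x") auto

lemma abs_sinc_le_one: "\<bar>sinc x\<bar> \<le> 1"
  using abs_sin_x_le_abs_x[of x] by (auto simp: sinc_def abs_divide divide_le_eq_1)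

lemma sinc_pos: "0 < x \<Longrightarrow> x < pi \<Longrightarrow> 0 < sinc x"
  using sin_gt_zero[of x] by (simp add: sinc_def)

lemma sinc_ge_neg_half: "- 1 / 2 \<le> sinc x"
proof (cases "2 \<le> \<bar>x\<bar>")
  case True
  then have "\<bar>sin x\<bar> * 2 \<le> \<bar>x\<bar>"
    using abs_sin_le_one[of x] by linarith
  then have "\<bar>sinc x\<bar> \<le> 1 / 2"
    using True by (auto simp: sinc_def abs_divide divide_le_eq)
  then show ?thesis by linarith
next
  case False
  then have "x = 0 \<or> 0 < sinc \<bar>x\<bar>"
    using sinc_pos[of "\<bar>x\<bar>"] pi_gt3 by linarith
  then show ?thesis
    unfolding sinc_abs by (auto simp: sinc_def)
qed

lemma abs_x_cos_minus_sin_le: "\<bar>(x::real) * cos x - sin x\<bar> \<le> x\<^sup>2"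
proof -
  have nonneg: "\<bar>y * cos y - sin y\<bar> \<le> y\<^sup>2" if "0 \<le> y" for y :: real
  proof -
    have bound: "\<bar>u * sin u\<bar> \<le> 2 * u" if "0 \<le> u" for u :: real
      using mult_left_mono[OF abs_sin_le_one[of u] that] that by (simp add: abs_mult)
    have "(\<lambda>u. u\<^sup>2 - \<sigma> * (u * cos u - sin u)) 0 \<le> (\<lambda>u. u\<^sup>2 - \<sigma> * (u * cos u - sin u)) y"
      if "\<bar>\<sigma>\<bar> = 1" for \<sigma> :: real
    proof (rule DERIV_nonneg_imp_nondecreasing[OF \<open>0 \<le> y\<close>])
      fix u :: real assume "0 \<le> u"
      have "((\<lambda>u. u\<^sup>2 - \<sigma> * (u * cos u - sin u)) has_real_derivative 2 * u + \<sigma> * (u * sin u)) (at u)"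
        by (auto intro!: derivative_eq_intros simp: algebra_simps)
      moreover have "0 \<le> 2 * u + \<sigma> * (u * sin u)"
        using bound[OF \<open>0 \<le> u\<close>] that abs_le_iff[of "\<sigma> * (u * sin u)"] by (auto simp: abs_mult)
      ultimately show "\<exists>d. ((\<lambda>u. u\<^sup>2 - \<sigma> * (u * cos u - sin u)) has_real_derivative d) (at u) \<and> 0 \<le> d"
        by blast
    qed
    from this[of 1] this[of "-1"] show ?thesis by (simp add: abs_le_iff)
  qed
  show ?thesis
    using nonneg[of x] nonneg[of "- x"] by (cases "0 \<le> x") auto
qed

lemma has_real_derivative_sinc:
  assumes "x \<noteq> 0"
  shows "(sinc has_real_derivative (x * cos x - sin x) / x\<^sup>2) (at x)"
proof -
  have "((\<lambda>y. sin y / y) has_real_derivative (x * cos x - sin x) / x\<^sup>2) (at x)"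
    using assms by (auto intro!: derivative_eq_intros simp: power2_eq_square field_simps)
  then show ?thesis
    by (rule has_field_derivative_transform_within_open[where S = "- {0}"])
       (use assms in \<open>auto simp: sinc_def\<close>)
qed

lemma isCont_sinc: "isCont sinc x"
proof (cases "x = 0")
  case False
  then show ?thesis
    using has_real_derivative_sinc DERIV_isCont by blast
next
  case True
  have "((\<lambda>h. sin h / h) \<longlongrightarrow> 1) (at (0::real))"
    using DERIV_sin[of 0] unfolding DERIV_def by simp
  then have "(sinc \<longlongrightarrow> 1) (at 0)"
    by (rule Lim_transform_within[where d = 1]) (auto simp: sinc_def)
  then show ?thesis
    using True by (simp add: isCont_def sinc_def)
qed

lemma sinc_lipschitz: "\<bar>sinc y - sinc x\<bar> \<le> \<bar>y - x\<bar>"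
proof -
  have ordered: "\<bar>sinc y - sinc x\<bar> \<le> y - x" if "0 \<le> x" "x < y" for x y
  proof -
    have "continuous_on {x..y} sinc"
      by (intro continuous_at_imp_continuous_on ballI isCont_sinc)
    moreover have "sinc differentiable (at u)" if "x < u" for u
      using has_real_derivative_sinc[of u] \<open>0 \<le> x\<close> that
      by (auto simp: real_differentiable_def)
    ultimately obtain l z where z: "x < z" "z < y" "(sinc has_real_derivative l) (at z)"
      and eq: "sinc y - sinc x = (y - x) * l"
      using MVT[OF \<open>x < y\<close>, of sinc] by blast
    have "z \<noteq> 0" using z that by auto
    with z(3) have "l = (z * cos z - sin z) / z\<^sup>2"
      using has_real_derivative_sinc DERIV_unique by blast
    then have "\<bar>l\<bar> \<le> 1"
      using abs_x_cos_minus_sin_le[of z] \<open>z \<noteq> 0\<close> by (simp add: abs_divide)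
    then show ?thesis
      using eq that by (simp add: abs_mult mult_left_le)
  qed
  have "\<bar>sinc \<bar>y\<bar> - sinc \<bar>x\<bar>\<bar> \<le> \<bar>\<bar>y\<bar> - \<bar>x\<bar>\<bar>"
    using ordered[of "\<bar>x\<bar>" "\<bar>y\<bar>"] ordered[of "\<bar>y\<bar>" "\<bar>x\<bar>"]
    by (cases "\<bar>x\<bar>" "\<bar>y\<bar>" rule: linorder_cases) (auto simp: abs_minus_commute)
  then show ?thesis
    unfolding sinc_abs by linarith
qed

lemma x_plus_cos_mult_sin_eq: "(x::real) + cos x * sin x = x * (1 + sinc (2 * x))"
  by (cases "x = 0") (simp_all add: sinc_def sin_double distrib_left)

lemma one_plus_sinc_ge: "1 / 2 \<le> 1 + sinc x"
  using sinc_ge_neg_half[of x] by linarith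

lemma x_plus_cos_mult_sin_pos: "0 < (x::real) \<Longrightarrow> 0 < x + cos x * sin x"
  unfolding x_plus_cos_mult_sin_eq using one_plus_sinc_ge[of "2 * x"] by simp

lemma x_plus_cos_mult_sin_nonzero: "(x::real) \<noteq> 0 \<Longrightarrow> x + cos x * sin x \<noteq> 0"
  unfolding x_plus_cos_mult_sin_eq using one_plus_sinc_ge[of "2 * x"] by simp

text \<open>Because \<open>1 + sinc \<ge> 1/2\<close>, this factor is bounded and globally Lipschitz, so \<open>f\<close> is
  locally Lipschitz and vanishes at most linearly at its zeros.\<close>
definition vf_factor :: "real \<Rightarrow> real" where
  "vf_factor x = sinc (2 * x) / (1 + sinc (2 * x))"

lemma f_vf_eq: "f_vf x = - x * vf_factor x"
proof (cases "x = 0")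
  case False
  have "cos x * sin x = x * sinc (2 * x)"
    using False by (simp add: sinc_def sin_double)
  then have "f_vf x = - (x * (x * sinc (2 * x))) / (x * (1 + sinc (2 * x)))"
    using False unfolding f_vf_def x_plus_cos_mult_sin_eq by (simp add: mult.assoc)
  also have "\<dots> = - x * vf_factor x"
    using False by (simp add: vf_factor_def)
  finally show ?thesis .
qed (simp add: f_vf_def)

lemma abs_vf_factor_le_one: "\<bar>vf_factor x\<bar> \<le> 1"
proof -
  define s where "s = sinc (2 * x)"
  have "- 1 / 2 \<le> s" "\<bar>s\<bar> \<le> 1"
    unfolding s_def using sinc_ge_neg_half abs_sinc_le_one by auto
  then have "\<bar>s\<bar> \<le> \<bar>1 + s\<bar>" "0 < 1 + s"
    by auto
  then show ?thesis
    unfolding vf_factor_def s_def[symmetric] by (simp add: abs_divide divide_le_eq_1)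
qed

lemma vf_factor_lipschitz: "\<bar>vf_factor x - vf_factor y\<bar> \<le> 8 * \<bar>x - y\<bar>"
proof -
  define u where "u = sinc (2 * x)"
  define v where "v = sinc (2 * y)"
  have u: "1 / 2 \<le> 1 + u" and v: "1 / 2 \<le> 1 + v"
    unfolding u_def v_def by (rule one_plus_sinc_ge)+
  have "1 / 2 * (1 / 2) \<le> (1 + u) * (1 + v)"
    using u v by (intro mult_mono) auto
  then have uv: "1 / 4 \<le> (1 + u) * (1 + v)"
    by simp
  have "\<bar>u - v\<bar> \<le> \<bar>2 * x - 2 * y\<bar>"
    unfolding u_def v_def by (rule sinc_lipschitz)
  also have "\<bar>2 * x - 2 * y\<bar> = 2 * \<bar>x - y\<bar>"
    unfolding right_diff_distrib[symmetric] abs_mult by simp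
  finally have lip: "\<bar>u - v\<bar> \<le> 2 * \<bar>x - y\<bar>" .
  have "vf_factor x - vf_factor y = (u * (1 + v) - v * (1 + u)) / ((1 + u) * (1 + v))"
    using u v unfolding vf_factor_def u_def[symmetric] v_def[symmetric]
    by (intro diff_frac_eq) auto
  also have "\<dots> = (u - v) / ((1 + u) * (1 + v))"
    by (simp add: algebra_simps)
  finally have "\<bar>vf_factor x - vf_factor y\<bar> = \<bar>u - v\<bar> / ((1 + u) * (1 + v))"
    using uv by (simp add: abs_divide)
  also have "\<dots> \<le> \<bar>u - v\<bar> / (1 / 4)"
    using uv by (intro divide_left_mono) auto
  also have "\<dots> \<le> 8 * \<bar>x - y\<bar>"
    using lip by simp
  finally show ?thesis .
qed

lemma f_vf_lipschitz:
  assumes "\<bar>y\<bar> \<le> M"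
  shows "\<bar>f_vf x - f_vf y\<bar> \<le> (1 + 8 * M) * \<bar>x - y\<bar>"
proof -
  have "\<bar>f_vf x - f_vf y\<bar> = \<bar>(x - y) * vf_factor x + y * (vf_factor x - vf_factor y)\<bar>"
    unfolding f_vf_eq by (simp add: algebra_simps)
  also have "\<dots> \<le> \<bar>x - y\<bar> * \<bar>vf_factor x\<bar> + \<bar>y\<bar> * \<bar>vf_factor x - vf_factor y\<bar>"
    unfolding abs_mult[symmetric] by (rule abs_triangle_ineq)
  also have "\<dots> \<le> \<bar>x - y\<bar> * 1 + M * (8 * \<bar>x - y\<bar>)"
    using abs_vf_factor_le_one[of x] vf_factor_lipschitz[of x y] assms
    by (intro add_mono mult_mono) auto
  finally show ?thesis
    by (simp add: algebra_simps)
qed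

lemma isCont_f_vf: "isCont f_vf x"
proof -
  have "1 + sinc (2 * x) \<noteq> 0"
    using one_plus_sinc_ge[of "2 * x"] by linarith
  then have "isCont vf_factor x"
    unfolding vf_factor_def[abs_def]
    by (intro continuous_intros isCont_o2[OF _ isCont_sinc]) auto
  then show ?thesis
    unfolding f_vf_eq[abs_def] by (intro continuous_intros)
qed

lemma continuous_on_f_vf: "continuous_on S f_vf"
  using isCont_f_vf continuous_at_imp_continuous_on by blast

lemma f_vf_zeros: "f_vf 0 = 0" "f_vf (pi / 2) = 0" "f_vf pi = 0" "f_vf (3 / 2 * pi) = 0"
  using cos_3over2_pi[simplified] by (simp_all add: f_vf_def)

lemma cos_neg_between: "pi / 2 < (x::real) \<Longrightarrow> x < 3 / 2 * pi \<Longrightarrow> cos x < 0"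
  using cos_gt_zero_pi[of "x - pi"] by (simp add: cos_diff)

lemma f_vf_neg_0_pi2: "0 < x \<Longrightarrow> x < pi / 2 \<Longrightarrow> f_vf x < 0"
  using sin_gt_zero[of x] cos_gt_zero[of x] x_plus_cos_mult_sin_pos[of x]
  by (simp add: f_vf_def)

lemma f_vf_pos_pi2_pi:
  assumes "pi / 2 < x" "x < pi"
  shows "0 < f_vf x"
proof -
  have "0 < x" "0 < sin x" "cos x < 0"
    using assms sin_gt_zero[of x] cos_neg_between[of x] pi_gt_zero by auto
  then have "0 < x * sin x * - cos x / (x + cos x * sin x)"
    using x_plus_cos_mult_sin_pos[OF \<open>0 < x\<close>] by (intro divide_pos_pos mult_pos_pos) auto
  then show ?thesis
    using \<open>0 < x\<close> by (simp add: f_vf_def mult.commute mult.left_commute)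
qed

lemma f_vf_neg_pi_3pi2:
  assumes "pi < x" "x < 3 / 2 * pi"
  shows "f_vf x < 0"
proof -
  have "0 < x" "sin x < 0" "cos x < 0"
    using assms sin_lt_zero[of x] cos_neg_between[of x] pi_gt_zero by auto
  then have "0 < x * (- sin x) * - cos x / (x + cos x * sin x)"
    using x_plus_cos_mult_sin_pos[OF \<open>0 < x\<close>] by (intro divide_pos_pos mult_pos_pos) auto
  then show ?thesis
    using \<open>0 < x\<close> by (simp add: f_vf_def mult.commute mult.left_commute)
qed

lemma abs_f_vf_le_near_zero:
  assumes "\<bar>e\<bar> \<le> 5" "f_vf e = 0"
  shows "\<bar>f_vf x\<bar> \<le> 41 * \<bar>x - e\<bar>"
  using f_vf_lipschitz[of e 5 x] assms by simp

section \<open>Scalar autonomous ODEs\<close>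

lemma ode_solution_unique_forward:
  fixes F \<phi> \<psi> :: "real \<Rightarrow> real"
  assumes lip: "\<And>M. \<exists>L. \<forall>x y. \<bar>x\<bar> \<le> M \<longrightarrow> \<bar>y\<bar> \<le> M \<longrightarrow> \<bar>F x - F y\<bar> \<le> L * \<bar>x - y\<bar>"
    and \<phi>: "\<And>s. (\<phi> has_real_derivative F (\<phi> s)) (at s)"
    and \<psi>: "\<And>s. (\<psi> has_real_derivative F (\<psi> s)) (at s)"
    and "\<phi> 0 = \<psi> 0" "0 \<le> t"
  shows "\<phi> t = \<psi> t"
proof -
  have "compact ((\<lambda>s. \<bar>\<phi> s\<bar> + \<bar>\<psi> s\<bar>) ` {0..t})"
    by (intro compact_continuous_image continuous_at_imp_continuous_on ballI continuous_intros
        DERIV_isCont[OF \<phi>] DERIV_isCont[OF \<psi>] compact_Icc)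
  then obtain M where "\<forall>x \<in> (\<lambda>s. \<bar>\<phi> s\<bar> + \<bar>\<psi> s\<bar>) ` {0..t}. \<bar>x\<bar> \<le> M"
    using compact_imp_bounded bounded_real by blast
  then have M: "\<And>s. s \<in> {0..t} \<Longrightarrow> \<bar>\<phi> s\<bar> + \<bar>\<psi> s\<bar> \<le> M"
    by fastforce
  obtain L where L: "\<And>x y. \<bar>x\<bar> \<le> M \<Longrightarrow> \<bar>y\<bar> \<le> M \<Longrightarrow> \<bar>F x - F y\<bar> \<le> L * \<bar>x - y\<bar>"
    using lip by blast
  define w where "w s = (\<phi> s - \<psi> s)\<^sup>2 * exp (- 2 * L * s)" for s
  have "w t \<le> w 0"
  proof (rule DERIV_nonpos_imp_nonincreasing[OF \<open>0 \<le> t\<close>])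
    fix s assume "0 \<le> s" "s \<le> t"
    define e where "e = \<phi> s - \<psi> s"
    have "\<bar>\<phi> s\<bar> \<le> M" "\<bar>\<psi> s\<bar> \<le> M"
      using M[of s] \<open>0 \<le> s\<close> \<open>s \<le> t\<close> by auto
    then have "\<bar>e\<bar> * \<bar>F (\<phi> s) - F (\<psi> s)\<bar> \<le> \<bar>e\<bar> * (L * \<bar>e\<bar>)"
      unfolding e_def by (intro mult_left_mono L) auto
    also have "\<bar>e\<bar> * (L * \<bar>e\<bar>) = L * e\<^sup>2"
      by (simp add: power2_eq_square abs_mult_self_eq mult.left_commute)
    finally have "e * (F (\<phi> s) - F (\<psi> s)) \<le> L * e\<^sup>2"
      using abs_ge_self[of "e * (F (\<phi> s) - F (\<psi> s))"] unfolding abs_mult by linarith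
    then have "(2 * e * (F (\<phi> s) - F (\<psi> s)) - 2 * L * e\<^sup>2) * exp (- 2 * L * s) \<le> 0"
      by (intro mult_nonpos_nonneg) auto
    moreover have "(w has_real_derivative
        (2 * e * (F (\<phi> s) - F (\<psi> s)) - 2 * L * e\<^sup>2) * exp (- 2 * L * s)) (at s)"
      unfolding w_def e_def
      by (rule derivative_eq_intros refl \<phi> \<psi> | simp)+ (simp add: algebra_simps power2_eq_square)
    ultimately show "\<exists>d. (w has_real_derivative d) (at s) \<and> d \<le> 0"
      by blast
  qed
  moreover have "w 0 = 0"
    using \<open>\<phi> 0 = \<psi> 0\<close> by (simp add: w_def)
  ultimately show ?thesis
    by (simp add: w_def mult_le_0_iff)
qed

lemma ode_solution_unique:
  fixes F \<phi> \<psi> :: "real \<Rightarrow> real"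
  assumes lip: "\<And>M. \<exists>L. \<forall>x y. \<bar>x\<bar> \<le> M \<longrightarrow> \<bar>y\<bar> \<le> M \<longrightarrow> \<bar>F x - F y\<bar> \<le> L * \<bar>x - y\<bar>"
    and \<phi>: "\<And>s. (\<phi> has_real_derivative F (\<phi> s)) (at s)"
    and \<psi>: "\<And>s. (\<psi> has_real_derivative F (\<psi> s)) (at s)"
    and "\<phi> 0 = \<psi> 0"
  shows "\<phi> = \<psi>"
proof
  fix t :: real
  have reversed: "((\<lambda>s. \<gamma> (- s)) has_real_derivative - F (\<gamma> (- s))) (at s)"
    if "\<And>s. (\<gamma> has_real_derivative F (\<gamma> s)) (at s)" for \<gamma> s
    using DERIV_mirror[of \<gamma> "F (\<gamma> (- s))" s] that[of "- s"] by simp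
  have lip': "\<exists>L. \<forall>x y. \<bar>x\<bar> \<le> M \<longrightarrow> \<bar>y\<bar> \<le> M \<longrightarrow> \<bar>- F x - - F y\<bar> \<le> L * \<bar>x - y\<bar>" for M
    using lip[of M] by (simp add: abs_minus_commute)
  show "\<phi> t = \<psi> t"
  proof (cases "0 \<le> t")
    case True
    then show ?thesis
      using ode_solution_unique_forward[OF lip \<phi> \<psi> \<open>\<phi> 0 = \<psi> 0\<close>] by blast
  next
    case False
    have "(\<lambda>s. \<phi> (- s)) (- t) = (\<lambda>s. \<psi> (- s)) (- t)"
      by (rule ode_solution_unique_forward[OF lip' reversed[OF \<phi>] reversed[OF \<psi>]])
         (use \<open>\<phi> 0 = \<psi> 0\<close> False in auto)
    then show ?thesis
      by simp
  qed
qed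

lemma antiderivative_on_open_interval:
  fixes h :: "real \<Rightarrow> real"
  assumes h: "continuous_on {a<..<b} h" and "a < r" "r < b"
  obtains T where "T r = 0" "\<And>x. a < x \<Longrightarrow> x < b \<Longrightarrow> (T has_real_derivative h x) (at x)"
proof -
  define T where "T x = (if r \<le> x then integral {r..x} h else - integral {x..r} h)" for x
  have "(T has_real_derivative h x) (at x)" if "a < x" "x < b" for x
  proof -
    define c where "c = (a + min x r) / 2"
    define d where "d = (b + max x r) / 2"
    have cd: "c < x" "c < r" "x < d" "r < d" "{c..d} \<subseteq> {a<..<b}"
      using that \<open>a < r\<close> \<open>r < b\<close> by (auto simp: c_def d_def)
    have hcd: "continuous_on {c..d} h"
      using continuous_on_subset[OF h cd(5)] .
    have int: "h integrable_on {c..u}" if "u \<le> d" for u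
      by (rule integrable_continuous_real, rule continuous_on_subset[OF hcd]) (use that in auto)
    have T_eq: "T u = integral {c..u} h - integral {c..r} h" if "u \<in> {c<..<d}" for u
    proof (cases "r \<le> u")
      case True
      then show ?thesis
        using Henstock_Kurzweil_Integration.integral_combine[of c r u h] int that cd
        by (simp add: T_def)
    next
      case False
      then show ?thesis
        using Henstock_Kurzweil_Integration.integral_combine[of c u r h] int that cd
        by (simp add: T_def)
    qed
    have "((\<lambda>u. integral {c..u} h) has_real_derivative h x) (at x within {c..d})"
      by (rule integral_has_real_derivative[OF hcd]) (use cd in auto)
    then have "((\<lambda>u. integral {c..u} h - integral {c..r} h) has_real_derivative h x) (at x)"
      using at_within_Icc_at[of c x d] cd by (auto intro!: derivative_eq_intros)
    then show ?thesis
      by (rule has_field_derivative_transform_within_open[where S = "{c<..<d}"])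
         (use cd T_eq in auto)
  qed
  then show ?thesis
    using that[of T] by (simp add: T_def)
qed

lemma inverse_of_increasing_surjection:
  fixes T T' :: "real \<Rightarrow> real"
  assumes deriv: "\<And>x. a < x \<Longrightarrow> x < b \<Longrightarrow> (T has_real_derivative T' x) (at x)"
    and pos: "\<And>x. a < x \<Longrightarrow> x < b \<Longrightarrow> 0 < T' x"
    and surj: "\<And>t. \<exists>x. a < x \<and> x < b \<and> T x = t"
  obtains \<phi> where "\<And>t. a < \<phi> t \<and> \<phi> t < b \<and> T (\<phi> t) = t"
    and "\<And>x. a < x \<Longrightarrow> x < b \<Longrightarrow> \<phi> (T x) = x"
    and "\<And>t. (\<phi> has_real_derivative inverse (T' (\<phi> t))) (at t)"
proof
  have mono: "T x < T y" if "a < x" "x < y" "y < b" for x y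
    using that by (intro DERIV_pos_imp_increasing[OF \<open>x < y\<close>]) (meson deriv pos less_le_trans le_less_trans)
  have inj: "x = y" if "a < x" "x < b" "a < y" "y < b" "T x = T y" for x y
    using mono[of x y] mono[of y x] that by (cases x y rule: linorder_cases) auto
  define \<phi> where "\<phi> t = (SOME x. a < x \<and> x < b \<and> T x = t)" for t
  show \<phi>: "a < \<phi> t \<and> \<phi> t < b \<and> T (\<phi> t) = t" for t
    unfolding \<phi>_def by (rule someI_ex[OF surj])
  show \<phi>_T: "\<phi> (T x) = x" if "a < x" "x < b" for x
    using \<phi>[of "T x"] inj that by blast
  fix t
  define x where "x = \<phi> t"
  have x: "a < x" "x < b" "T x = t"
    using \<phi>[of t] by (auto simp: x_def)
  define e where "e = min (x - a) (b - x) / 2"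
  have "e \<le> (x - a) / 2" "e \<le> (b - x) / 2"
    by (auto simp: e_def)
  then have near: "a < z \<and> z < b" if "\<bar>z - x\<bar> \<le> e" for z
    using that x by (auto simp: abs_le_iff)
  have "isCont T z" if "a < z" "z < b" for z
    using deriv[OF that] by (rule DERIV_isCont)
  then have "isCont \<phi> (T x)"
    by (intro isCont_inverse_function[where f = T and g = \<phi> and d = e])
       (use x near \<phi>_T in \<open>auto simp: e_def\<close>)
  moreover have "(T has_real_derivative T' (\<phi> t)) (at (\<phi> t))" "T' (\<phi> t) \<noteq> 0"
    using deriv[OF x(1,2)] pos[OF x(1,2)] by (auto simp: x_def)
  ultimately show "(\<phi> has_real_derivative inverse (T' (\<phi> t))) (at t)"
    using x \<phi> by (intro DERIV_inverse_function[where f = T and a = "t - 1" and b = "t + 1"]) auto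
qed

lemma ln_ratio_le_of_deriv_ge_left:
  assumes "a < x" "x \<le> y" "0 < C"
    and "\<And>u. x \<le> u \<Longrightarrow> u \<le> y \<Longrightarrow>
      (T has_real_derivative T' u) (at u) \<and> 1 / (C * (u - a)) \<le> T' u"
  shows "(ln (y - a) - ln (x - a)) / C \<le> T y - T x"
proof -
  have "(\<lambda>u. T u - ln (u - a) / C) x \<le> (\<lambda>u. T u - ln (u - a) / C) y"
  proof (rule DERIV_nonneg_imp_nondecreasing[OF \<open>x \<le> y\<close>])
    fix u assume "x \<le> u" "u \<le> y"
    with assms have "((\<lambda>u. T u - ln (u - a) / C) has_real_derivative T' u - 1 / (C * (u - a))) (at u)"
      by (auto intro!: derivative_eq_intros simp: field_simps)
    moreover have "0 \<le> T' u - 1 / (C * (u - a))"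
      using assms \<open>x \<le> u\<close> \<open>u \<le> y\<close> by auto
    ultimately show "\<exists>d. ((\<lambda>u. T u - ln (u - a) / C) has_real_derivative d) (at u) \<and> 0 \<le> d"
      by blast
  qed
  then show ?thesis
    by (simp add: diff_divide_distrib)
qed

lemma ln_ratio_le_of_deriv_ge_right:
  assumes "x \<le> y" "y < b" "0 < C"
    and "\<And>u. x \<le> u \<Longrightarrow> u \<le> y \<Longrightarrow>
      (T has_real_derivative T' u) (at u) \<and> 1 / (C * (b - u)) \<le> T' u"
  shows "(ln (b - x) - ln (b - y)) / C \<le> T y - T x"
proof -
  have "(\<lambda>u. T u + ln (b - u) / C) x \<le> (\<lambda>u. T u + ln (b - u) / C) y"
  proof (rule DERIV_nonneg_imp_nondecreasing[OF \<open>x \<le> y\<close>])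
    fix u assume "x \<le> u" "u \<le> y"
    with assms have "((\<lambda>u. T u + ln (b - u) / C) has_real_derivative T' u - 1 / (C * (b - u))) (at u)"
      by (auto intro!: derivative_eq_intros simp: field_simps)
    moreover have "0 \<le> T' u - 1 / (C * (b - u))"
      using assms \<open>x \<le> u\<close> \<open>u \<le> y\<close> by auto
    ultimately show "\<exists>d. ((\<lambda>u. T u + ln (b - u) / C) has_real_derivative d) (at u) \<and> 0 \<le> d"
      by blast
  qed
  then show ?thesis
    by (simp add: diff_divide_distrib)
qed

lemma surj_of_deriv_ge_inverse_dist:
  fixes T T' :: "real \<Rightarrow> real"
  assumes "a < r" "r < b" "0 < C"
    and deriv: "\<And>x. a < x \<Longrightarrow> x < b \<Longrightarrow> (T has_real_derivative T' x) (at x)"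
    and left: "\<And>x. a < x \<Longrightarrow> x < b \<Longrightarrow> 1 / (C * (x - a)) \<le> T' x"
    and right: "\<And>x. a < x \<Longrightarrow> x < b \<Longrightarrow> 1 / (C * (b - x)) \<le> T' x"
  shows "\<exists>x. a < x \<and> x < b \<and> T x = t"
proof -
  have cont: "\<forall>x. y \<le> x \<and> x \<le> z \<longrightarrow> isCont T x" if "a < y" "z < b" for y z
  proof (intro allI impI)
    fix x assume "y \<le> x \<and> x \<le> z"
    with that show "isCont T x"
      using deriv[of x] DERIV_isCont by auto
  qed
  show ?thesis
  proof (cases "t \<le> T r")
    case True
    define x where "x = a + (r - a) * exp (C * (t - T r))"
    have "exp (C * (t - T r)) \<le> 1"
      using True \<open>0 < C\<close> by (simp add: mult_nonneg_nonpos)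
    then have "(r - a) * exp (C * (t - T r)) \<le> r - a"
      using \<open>a < r\<close> by (intro mult_left_le) auto
    moreover have "0 < (r - a) * exp (C * (t - T r))"
      using \<open>a < r\<close> by simp
    ultimately have x: "a < x" "x \<le> r"
      unfolding x_def by linarith+
    have "(ln (r - a) - ln (x - a)) / C \<le> T r - T x"
      using assms x by (intro ln_ratio_le_of_deriv_ge_left[where T' = T']) auto
    moreover have "ln (x - a) = ln (r - a) + C * (t - T r)"
      using \<open>a < r\<close> by (simp add: x_def ln_mult)
    ultimately have "T x \<le> t"
      using \<open>0 < C\<close> by simp
    then obtain y where "x \<le> y" "y \<le> r" "T y = t"
      using IVT[of T x t r] cont[of x r] True x \<open>r < b\<close> by auto
    then show ?thesis
      using x \<open>r < b\<close> by (intro exI[of _ y]) auto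
  next
    case False
    define x where "x = b - (b - r) * exp (- C * (t - T r))"
    have "exp (- C * (t - T r)) \<le> 1"
      using False \<open>0 < C\<close> by simp
    then have "(b - r) * exp (- C * (t - T r)) \<le> b - r"
      using \<open>r < b\<close> by (intro mult_left_le) auto
    moreover have "0 < (b - r) * exp (- C * (t - T r))"
      using \<open>r < b\<close> by simp
    ultimately have x: "r \<le> x" "x < b"
      unfolding x_def by linarith+
    have "(ln (b - r) - ln (b - x)) / C \<le> T x - T r"
      using assms x by (intro ln_ratio_le_of_deriv_ge_right[where T' = T']) auto
    moreover have "ln (b - x) = ln (b - r) - C * (t - T r)"
      using \<open>r < b\<close> by (simp add: x_def ln_mult)
    ultimately have "t \<le> T x"
      using \<open>0 < C\<close> by simp
    then obtain y where "r \<le> y" "y \<le> x" "T y = t"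
      using IVT[of T r t x] cont[of r x] False x \<open>a < r\<close> by auto
    then show ?thesis
      using x \<open>a < r\<close> by (intro exI[of _ y]) auto
  qed
qed

text \<open>The solution is the inverse of the time map \<open>x \<mapsto> \<integral>\<^sub>r\<^sup>x 1/F\<close>; the linear bounds on \<open>F\<close>
  make this map logarithmically unbounded at both ends, so the solution exists for all time.\<close>
lemma ode_solution_between_zeros_pos:
  fixes F :: "real \<Rightarrow> real"
  assumes cont: "continuous_on {a<..<b} F"
    and pos: "\<And>y. a < y \<Longrightarrow> y < b \<Longrightarrow> 0 < F y"
    and left: "\<And>y. a < y \<Longrightarrow> y < b \<Longrightarrow> F y \<le> C * (y - a)"
    and right: "\<And>y. a < y \<Longrightarrow> y < b \<Longrightarrow> F y \<le> C * (b - y)"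
    and "a < r" "r < b"
  obtains \<phi> where "\<phi> 0 = r" "\<And>s. a < \<phi> s \<and> \<phi> s < b"
    and "\<And>s. (\<phi> has_real_derivative F (\<phi> s)) (at s)"
proof -
  have "0 < C * (r - a)"
    using pos[of r] left[of r] \<open>a < r\<close> \<open>r < b\<close> by linarith
  then have "0 < C"
    using \<open>a < r\<close> by (simp add: zero_less_mult_iff)
  have "continuous_on {a<..<b} (\<lambda>y. 1 / F y)"
    using cont pos by (intro continuous_intros) (auto simp: less_imp_neq[symmetric])
  then obtain T where T: "T r = 0"
    and deriv: "\<And>x. a < x \<Longrightarrow> x < b \<Longrightarrow> (T has_real_derivative 1 / F x) (at x)"
    using antiderivative_on_open_interval \<open>a < r\<close> \<open>r < b\<close> by metis
  have "\<exists>x. a < x \<and> x < b \<and> T x = t" for t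
    using \<open>a < r\<close> \<open>r < b\<close> \<open>0 < C\<close> deriv
    by (rule surj_of_deriv_ge_inverse_dist)
       (use left right pos \<open>0 < C\<close> in \<open>auto intro!: divide_left_mono mult_pos_pos\<close>)
  then obtain \<phi> where \<phi>: "\<And>t. a < \<phi> t \<and> \<phi> t < b \<and> T (\<phi> t) = t"
    and \<phi>_T: "\<And>x. a < x \<Longrightarrow> x < b \<Longrightarrow> \<phi> (T x) = x"
    and \<phi>_deriv: "\<And>t. (\<phi> has_real_derivative inverse (1 / F (\<phi> t))) (at t)"
    using inverse_of_increasing_surjection[of a b T "\<lambda>x. 1 / F x"] deriv pos by auto
  show ?thesis
    using that[of \<phi>] \<phi> \<phi>_T[of r] \<phi>_deriv \<open>a < r\<close> \<open>r < b\<close> T by simp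
qed

lemma ode_solution_between_zeros_neg:
  fixes F :: "real \<Rightarrow> real"
  assumes "continuous_on {a<..<b} F"
    and "\<And>y. a < y \<Longrightarrow> y < b \<Longrightarrow> F y < 0"
    and "\<And>y. a < y \<Longrightarrow> y < b \<Longrightarrow> - F y \<le> C * (y - a)"
    and "\<And>y. a < y \<Longrightarrow> y < b \<Longrightarrow> - F y \<le> C * (b - y)"
    and "a < r" "r < b"
  obtains \<phi> where "\<phi> 0 = r" "\<And>s. a < \<phi> s \<and> \<phi> s < b"
    and "\<And>s. (\<phi> has_real_derivative F (\<phi> s)) (at s)"
proof -
  obtain \<psi> where \<psi>: "\<psi> 0 = r" "\<And>s. a < \<psi> s \<and> \<psi> s < b"
    and \<psi>_deriv: "\<And>s. (\<psi> has_real_derivative - F (\<psi> s)) (at s)"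
    using ode_solution_between_zeros_pos[of a b "\<lambda>y. - F y" C r] assms
    by (auto intro: continuous_intros)
  have "((\<lambda>s. \<psi> (- s)) has_real_derivative F (\<psi> (- s))) (at s)" for s
    using DERIV_mirror[of \<psi> "- F (\<psi> (- s))" s] \<psi>_deriv[of "- s"] by simp
  then show ?thesis
    using that[of "\<lambda>s. \<psi> (- s)"] \<psi> by simp
qed

lemma flow_F_eqI:
  assumes "\<phi> 0 = r" "\<And>s. (\<phi> has_real_derivative f_vf (\<phi> s)) (at s)"
  shows "flow_F r = \<phi>"
proof -
  have "(THE \<psi>. \<psi> 0 = r \<and> (\<forall>s. (\<psi> has_real_derivative f_vf (\<psi> s)) (at s))) = \<phi>"
  proof (rule the_equality)
    fix \<psi> assume "\<psi> 0 = r \<and> (\<forall>s. (\<psi> has_real_derivative f_vf (\<psi> s)) (at s))"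
    then show "\<psi> = \<phi>"
      using f_vf_lipschitz assms
      by (intro ode_solution_unique[where F = f_vf]) (blast, auto)
  qed (use assms in auto)
  then show ?thesis
    by (simp add: flow_F_def[abs_def])
qed

lemma G_fn_at_zero_of_f_vf:
  assumes "f_vf r = 0" "0 \<le> t"
  shows "G_fn r t = t * g_fn r"
proof -
  have "flow_F r = (\<lambda>_. r)"
    using assms by (intro flow_F_eqI) auto
  then show ?thesis
    using assms by (simp add: G_fn_def)
qed

lemma g_fn_eq:
  assumes "x \<noteq> 0" "sin x \<noteq> 0"
  shows "g_fn x = f_vf x * (sin x + x * cos x) / (x * sin x)"
proof -
  define D where "D = x + cos x * sin x"
  have "D \<noteq> 0"
    using x_plus_cos_mult_sin_nonzero[OF assms(1)] by (simp add: D_def)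
  have "f_vf x = x * sin x * (- cos x / D)"
    using assms(1) by (simp add: f_vf_def D_def)
  then have "f_vf x * (sin x + x * cos x) / (x * sin x) = - cos x / D * (sin x + x * cos x)"
    using assms by simp
  also have "\<dots> = g_fn x"
    using assms(1) \<open>D \<noteq> 0\<close> by (simp add: g_fn_def D_def field_simps)
  finally show ?thesis ..
qed

lemma G_fn_eq_ln_ratio:
  assumes "\<phi> 0 = r" and deriv: "\<And>s. (\<phi> has_real_derivative f_vf (\<phi> s)) (at s)"
    and sign: "\<And>s. 0 < \<sigma> * (\<phi> s * sin (\<phi> s))" and "0 \<le> t"
  shows "G_fn r t = ln (\<phi> t * sin (\<phi> t) / (r * sin r))"
proof -
  define H where "H s = ln (\<sigma> * (\<phi> s * sin (\<phi> s)))" for s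
  have "(H has_real_derivative g_fn (\<phi> s)) (at s)" for s
  proof -
    have "\<phi> s \<noteq> 0" "sin (\<phi> s) \<noteq> 0" "\<sigma> \<noteq> 0"
      using sign[of s] by auto
    then show ?thesis
      unfolding H_def g_fn_eq[OF \<open>\<phi> s \<noteq> 0\<close> \<open>sin (\<phi> s) \<noteq> 0\<close>] using sign[of s]
      by (auto intro!: derivative_eq_intros deriv simp: field_simps)
  qed
  then have "((\<lambda>s. g_fn (\<phi> s)) has_integral H t - H 0) {0..t}"
    by (intro fundamental_theorem_of_calculus[OF \<open>0 \<le> t\<close>])
       (auto simp: has_real_derivative_iff_has_vector_derivative[symmetric]
          intro: has_field_derivative_at_within)
  then have "G_fn r t = H t - H 0"
    using flow_F_eqI[OF assms(1,2)] by (simp add: G_fn_def integral_unique)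
  also have "\<dots> = ln (\<sigma> * (\<phi> t * sin (\<phi> t)) / (\<sigma> * (r * sin r)))"
    using ln_divide_pos[OF sign[of t] sign[of 0]] \<open>\<phi> 0 = r\<close> by (simp add: H_def)
  also have "\<sigma> * (\<phi> t * sin (\<phi> t)) / (\<sigma> * (r * sin r)) = \<phi> t * sin (\<phi> t) / (r * sin r)"
    using sign[of 0] by (cases "\<sigma> = 0") auto
  finally show ?thesis .
qed

section \<open>The function x sin x and its maximum at r_M\<close>

definition xsin_deriv :: "real \<Rightarrow> real" where
  "xsin_deriv x = sin x + x * cos x"

lemma has_real_derivative_x_mult_sin: "((\<lambda>x. x * sin x) has_real_derivative xsin_deriv x) (at x)"
  unfolding xsin_deriv_def by (auto intro!: derivative_eq_intros simp: algebra_simps)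

lemma xsin_deriv_strict_antimono:
  assumes "pi / 2 \<le> x" "x < y" "y \<le> pi"
  shows "xsin_deriv y < xsin_deriv x"
proof (rule DERIV_neg_imp_decreasing_open[OF \<open>x < y\<close>])
  fix u assume "x < u" "u < y"
  then have "cos u < 0" "0 < sin u" "0 < u"
    using assms pi_gt_zero by (auto intro!: cos_neg_between sin_gt_zero)
  then have "2 * cos u - u * sin u < 0"
    using mult_pos_pos[of u "sin u"] by linarith
  moreover have "(xsin_deriv has_real_derivative 2 * cos u - u * sin u) (at u)"
    unfolding xsin_deriv_def by (auto intro!: derivative_eq_intros simp: algebra_simps)
  ultimately show "\<exists>d. (xsin_deriv has_real_derivative d) (at u) \<and> d < 0"
    by blast
qed (auto simp: xsin_deriv_def intro!: continuous_intros)

lemma eq_minus_tan_iff_xsin_deriv_eq_0: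
  assumes "pi / 2 < x" "x < pi"
  shows "x = - tan x \<longleftrightarrow> xsin_deriv x = 0"
  using cos_neg_between[of x] assms by (auto simp: xsin_deriv_def tan_def field_simps)

lemma r_M_root: "pi / 2 < r_M" "r_M < pi" "xsin_deriv r_M = 0"
proof -
  have "\<exists>x \<ge> pi / 2. x \<le> pi \<and> xsin_deriv x = 0"
    using pi_gt_zero
    by (intro IVT2) (auto simp: xsin_deriv_def intro!: continuous_intros)
  then obtain x where x: "pi / 2 \<le> x" "x \<le> pi" "xsin_deriv x = 0"
    by blast
  moreover have "xsin_deriv (pi / 2) = 1" "xsin_deriv pi = - pi"
    by (simp_all add: xsin_deriv_def)
  ultimately have "x \<noteq> pi / 2" "x \<noteq> pi"
    using pi_gt_zero by (metis zero_neq_one, force)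
  with x have x: "pi / 2 < x" "x < pi" "xsin_deriv x = 0"
    by auto
  have "r_M = x"
    unfolding r_M_def
  proof (rule the_equality)
    fix y assume "y \<in> {pi / 2<..<pi} \<and> y = - tan y"
    then show "y = x"
      using x eq_minus_tan_iff_xsin_deriv_eq_0[of y]
        xsin_deriv_strict_antimono[of x y] xsin_deriv_strict_antimono[of y x]
      by (cases x y rule: linorder_cases) auto
  qed (use x eq_minus_tan_iff_xsin_deriv_eq_0 in auto)
  with x show "pi / 2 < r_M" "r_M < pi" "xsin_deriv r_M = 0"
    by auto
qed

lemma xsin_deriv_pos: "pi / 2 \<le> x \<Longrightarrow> x < r_M \<Longrightarrow> 0 < xsin_deriv x"
  using xsin_deriv_strict_antimono[of x r_M] r_M_root by auto

lemma xsin_deriv_nonneg: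
  assumes "0 \<le> x" "x \<le> r_M"
  shows "0 \<le> xsin_deriv x"
proof (cases "x < pi / 2")
  case True
  then show ?thesis
    using assms sin_ge_zero[of x] cos_ge_zero[of x] pi_gt_zero by (simp add: xsin_deriv_def)
next
  case False
  then show ?thesis
    using xsin_deriv_pos[of x] r_M_root assms by (cases "x = r_M") auto
qed

lemma xsin_deriv_nonpos:
  assumes "r_M \<le> x" "x \<le> 3 / 2 * pi"
  shows "xsin_deriv x \<le> 0"
proof (cases "x \<le> pi")
  case True
  then show ?thesis
    using xsin_deriv_strict_antimono[of r_M x] r_M_root assms by (cases "x = r_M") auto
next
  case False
  have "0 \<le> cos (x - pi)"
    using False assms by (intro cos_ge_zero) auto
  then have "sin x \<le> 0" "cos x \<le> 0" "0 \<le> x"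
    using False assms pi_gt_zero sin_le_zero[of x] by (auto simp: cos_diff)
  then show ?thesis
    using mult_nonneg_nonpos[of x "cos x"] by (simp add: xsin_deriv_def)
qed

lemma x_mult_sin_mono: "0 \<le> x \<Longrightarrow> x \<le> y \<Longrightarrow> y \<le> r_M \<Longrightarrow> x * sin x \<le> y * sin y"
  using has_real_derivative_x_mult_sin xsin_deriv_nonneg
  by (intro DERIV_nonneg_imp_nondecreasing[of x y "\<lambda>x. x * sin x"]) force+

lemma x_mult_sin_antimono:
  "r_M \<le> x \<Longrightarrow> x \<le> y \<Longrightarrow> y \<le> 3 / 2 * pi \<Longrightarrow> y * sin y \<le> x * sin x"
  using has_real_derivative_x_mult_sin xsin_deriv_nonpos
  by (intro DERIV_nonpos_imp_nonincreasing[of x y "\<lambda>x. x * sin x"]) force+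

lemma x_mult_sin_le_peak: "0 \<le> x \<Longrightarrow> x \<le> 3 / 2 * pi \<Longrightarrow> x * sin x \<le> r_M * sin r_M"
  using x_mult_sin_mono[of x r_M] x_mult_sin_antimono[of r_M x] by (cases "x \<le> r_M") auto

lemma half_pi_less_x_mult_sin:
  assumes "pi / 2 < x" "x \<le> r_M"
  shows "pi / 2 < x * sin x"
proof -
  have "(\<lambda>x. x * sin x) (pi / 2) < (\<lambda>x. x * sin x) x"
    using assms has_real_derivative_x_mult_sin xsin_deriv_pos
    by (intro DERIV_pos_imp_increasing_open[OF \<open>pi / 2 < x\<close>] continuous_intros) force+
  then show ?thesis
    by simp
qed

lemma xsin_deriv_neg_at_2_035: "xsin_deriv (407 / 200) < 0"
proof -
  define x :: real where "x = 407 / 200"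
  define E :: real where "E = inverse (fact 14) * \<bar>x\<bar> ^ 14"
  define S where "S = x - x^3/6 + x^5/120 - x^7/5040 + x^9/362880 - x^11/39916800 + x^13/6227020800"
  define C where "C = 1 - x^2/2 + x^4/24 - x^6/720 + x^8/40320 - x^10/3628800 + x^12/479001600"
  have S: "(\<Sum>m<14. sin_coeff m * x ^ m) = S"
    unfolding S_def by (simp add: lessThan_nat_numeral sin_coeff_def fact_numeral)
  have C: "(\<Sum>m<14. cos_coeff m * x ^ m) = C"
    unfolding C_def by (simp add: lessThan_nat_numeral cos_coeff_def fact_numeral)
  have sin_approx: "\<bar>sin x - S\<bar> \<le> E"
    using Maclaurin_sin_bound[of x 14] unfolding S E_def .
  obtain c where "cos x = C + cos c / fact 14 * x ^ 14"
    using Maclaurin_cos_expansion[of x 14] unfolding C by auto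
  then have "\<bar>cos x - C\<bar> = \<bar>cos c\<bar> * (inverse (fact 14) * \<bar>x\<bar> ^ 14)"
    by (simp add: abs_mult divide_inverse power_abs)
  also have "\<dots> \<le> E"
    unfolding E_def by (rule mult_left_le_one_le) auto
  finally have cos_approx: "\<bar>cos x - C\<bar> \<le> E" .
  have "sin x + x * cos x \<le> (S + E) + x * (C + E)"
    using sin_approx cos_approx by (intro add_mono mult_left_mono) (auto simp: x_def)
  also have "\<dots> < 0"
    unfolding S_def C_def E_def x_def by (simp add: power_divide fact_numeral)
  finally show ?thesis
    unfolding x_def xsin_deriv_def .
qed

lemma r_M_less_2_035: "r_M < 407 / 200"
proof (rule ccontr)
  assume "\<not> r_M < 407 / 200"
  moreover have "pi / 2 \<le> 407 / 200"
    using pi_approx by simp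
  ultimately have "0 \<le> xsin_deriv (407 / 200)"
    using xsin_deriv_nonneg[of "407 / 200"] pi_gt_zero by simp
  then show False
    using xsin_deriv_neg_at_2_035 by simp
qed

text \<open>At the critical point \<open>tan r_M = - r_M\<close>, hence \<open>cos\<^sup>2 r_M = 1 / (1 + r_M\<^sup>2)\<close>.\<close>
lemma peak_squared: "(r_M * sin r_M)\<^sup>2 = r_M ^ 4 / (1 + r_M\<^sup>2)"
proof -
  have sin_eq: "sin r_M = - r_M * cos r_M"
    using r_M_root(3) unfolding xsin_deriv_def by linarith
  have "(cos r_M)\<^sup>2 * (1 + r_M\<^sup>2) = 1"
    using sin_cos_squared_add[of r_M] unfolding sin_eq by (simp add: algebra_simps power2_eq_square)
  moreover have "0 < 1 + r_M\<^sup>2"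
    by (simp add: add_pos_nonneg)
  ultimately have "(cos r_M)\<^sup>2 = 1 / (1 + r_M\<^sup>2)"
    by (simp add: eq_divide_eq)
  have "(r_M * sin r_M)\<^sup>2 = r_M ^ 4 * (cos r_M)\<^sup>2"
    unfolding sin_eq by (simp add: algebra_simps power2_eq_square power4_eq_xxxx)
  with \<open>(cos r_M)\<^sup>2 = 1 / (1 + r_M\<^sup>2)\<close> show ?thesis
    by simp
qed

lemma peak_bounds: "pi / 2 < r_M * sin r_M" "r_M * sin r_M < 7 * pi / 12"
proof -
  show "pi / 2 < r_M * sin r_M"
    using half_pi_less_x_mult_sin[of r_M] r_M_root by simp
  have mono: "x ^ 4 / (1 + x\<^sup>2) < y ^ 4 / (1 + y\<^sup>2)" if "0 < x" "x < y" for x y :: real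
  proof -
    have "x ^ 4 < y ^ 4"
      using that by (simp add: power_strict_mono)
    moreover have "(x\<^sup>2 * y\<^sup>2) * x\<^sup>2 \<le> (x\<^sup>2 * y\<^sup>2) * y\<^sup>2"
      using that by (intro mult_left_mono power_mono) auto
    ultimately have "x ^ 4 * (1 + y\<^sup>2) < y ^ 4 * (1 + x\<^sup>2)"
      by (simp add: algebra_simps power4_eq_xxxx power2_eq_square)
    then show ?thesis
      by (simp add: field_simps add_pos_nonneg)
  qed
  have "(r_M * sin r_M)\<^sup>2 < (407 / 200) ^ 4 / (1 + (407 / 200)\<^sup>2)"
    unfolding peak_squared using r_M_root pi_gt_zero r_M_less_2_035 by (intro mono) auto
  also have "\<dots> < (7 * 3.141592653588 / 12)\<^sup>2"
    by (simp add: power_divide)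
  also have "\<dots> \<le> (7 * pi / 12)\<^sup>2"
    using pi_approx by (intro power_mono) auto
  finally show "r_M * sin r_M < 7 * pi / 12"
    by (rule power_less_imp_less_base) (use pi_gt_zero in simp)
qed

section \<open>Bounds on G\<close>

lemma f_vf_solution_increasing:
  assumes "a < r" "r < b" "\<bar>a\<bar> \<le> 5" "\<bar>b\<bar> \<le> 5" "f_vf a = 0" "f_vf b = 0"
    and pos: "\<And>y. a < y \<Longrightarrow> y < b \<Longrightarrow> 0 < f_vf y"
  obtains \<phi> where "\<phi> 0 = r" "\<And>s. a < \<phi> s \<and> \<phi> s < b"
    and "\<And>s. (\<phi> has_real_derivative f_vf (\<phi> s)) (at s)" and "\<And>t. 0 \<le> t \<Longrightarrow> r \<le> \<phi> t"
proof -
  obtain \<phi> where \<phi>: "\<phi> 0 = r" "\<And>s. a < \<phi> s \<and> \<phi> s < b"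
    and deriv: "\<And>s. (\<phi> has_real_derivative f_vf (\<phi> s)) (at s)"
  proof (rule ode_solution_between_zeros_pos[where C = 41])
    fix y assume "a < y" "y < b"
    then show "0 < f_vf y" "f_vf y \<le> 41 * (y - a)" "f_vf y \<le> 41 * (b - y)"
      using pos abs_f_vf_le_near_zero[of a y] abs_f_vf_le_near_zero[of b y] assms by auto
  qed (use assms continuous_on_f_vf in auto)
  have "\<phi> 0 \<le> \<phi> t" if "0 \<le> t" for t
    using deriv pos \<phi>(2) by (intro DERIV_nonneg_imp_nondecreasing[OF that]) (force intro: less_imp_le)
  with that \<phi> deriv show ?thesis
    by auto
qed

lemma f_vf_solution_decreasing:
  assumes "a < r" "r < b" "\<bar>a\<bar> \<le> 5" "\<bar>b\<bar> \<le> 5" "f_vf a = 0" "f_vf b = 0"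
    and neg: "\<And>y. a < y \<Longrightarrow> y < b \<Longrightarrow> f_vf y < 0"
  obtains \<phi> where "\<phi> 0 = r" "\<And>s. a < \<phi> s \<and> \<phi> s < b"
    and "\<And>s. (\<phi> has_real_derivative f_vf (\<phi> s)) (at s)" and "\<And>t. 0 \<le> t \<Longrightarrow> \<phi> t \<le> r"
proof -
  obtain \<phi> where \<phi>: "\<phi> 0 = r" "\<And>s. a < \<phi> s \<and> \<phi> s < b"
    and deriv: "\<And>s. (\<phi> has_real_derivative f_vf (\<phi> s)) (at s)"
  proof (rule ode_solution_between_zeros_neg[where C = 41])
    fix y assume "a < y" "y < b"
    then show "f_vf y < 0" "- f_vf y \<le> 41 * (y - a)" "- f_vf y \<le> 41 * (b - y)"
      using neg abs_f_vf_le_near_zero[of a y] abs_f_vf_le_near_zero[of b y] assms by auto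
  qed (use assms continuous_on_f_vf in auto)
  have "\<phi> t \<le> \<phi> 0" if "0 \<le> t" for t
    using deriv neg \<phi>(2) by (intro DERIV_nonpos_imp_nonincreasing[OF that]) (force intro: less_imp_le)
  with that \<phi> deriv show ?thesis
    by auto
qed

lemma pi_less_3_2: "pi < 3.2"
  using pi_approx by simp

lemma G_fn_nonpos_0_half_pi:
  assumes "0 < r" "r < pi / 2" "0 \<le> t"
  shows "G_fn r t \<le> 0"
proof -
  obtain \<phi> where \<phi>: "\<phi> 0 = r" "\<And>s. 0 < \<phi> s \<and> \<phi> s < pi / 2"
    and deriv: "\<And>s. (\<phi> has_real_derivative f_vf (\<phi> s)) (at s)" and "\<phi> t \<le> r"
    using f_vf_solution_decreasing[of 0 r "pi / 2"] assms f_vf_zeros f_vf_neg_0_pi2 pi_less_3_2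
    by auto
  have pos: "0 < 1 * (\<phi> s * sin (\<phi> s))" for s
    using \<phi>(2)[of s] sin_gt_zero[of "\<phi> s"] pi_gt_zero by simp
  have "\<phi> t * sin (\<phi> t) \<le> r * sin r"
    using \<phi>(2)[of t] \<open>\<phi> t \<le> r\<close> assms r_M_root by (intro x_mult_sin_mono) auto
  then have "\<phi> t * sin (\<phi> t) / (r * sin r) \<le> 1"
    using pos[of 0] \<phi>(1) by simp
  then show ?thesis
    using G_fn_eq_ln_ratio[OF \<phi>(1) deriv pos \<open>0 \<le> t\<close>] pos[of t] pos[of 0] \<phi>(1) by simp
qed

lemma G_fn_nonpos_pi_3_half_pi:
  assumes "pi < r" "r < 3 / 2 * pi" "0 \<le> t"
  shows "G_fn r t \<le> 0"
proof -
  obtain \<phi> where \<phi>: "\<phi> 0 = r" "\<And>s. pi < \<phi> s \<and> \<phi> s < 3 / 2 * pi"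
    and deriv: "\<And>s. (\<phi> has_real_derivative f_vf (\<phi> s)) (at s)" and "\<phi> t \<le> r"
    using f_vf_solution_decreasing[of pi r "3 / 2 * pi"] assms f_vf_zeros f_vf_neg_pi_3pi2
      pi_less_3_2 pi_gt_zero by auto
  have neg: "\<phi> s * sin (\<phi> s) < 0" for s
    using \<phi>(2)[of s] sin_lt_zero[of "\<phi> s"] pi_gt_zero by (simp add: mult_pos_neg)
  then have pos: "0 < (- 1) * (\<phi> s * sin (\<phi> s))" for s
    by simp
  have "r * sin r \<le> \<phi> t * sin (\<phi> t)"
    using \<phi>(2)[of t] \<open>\<phi> t \<le> r\<close> assms r_M_root by (intro x_mult_sin_antimono) auto
  then have "\<phi> t * sin (\<phi> t) / (r * sin r) \<le> 1"
    using neg[of 0] \<phi>(1) by (simp add: divide_le_eq_1)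
  then show ?thesis
    using G_fn_eq_ln_ratio[OF \<phi>(1) deriv pos \<open>0 \<le> t\<close>] neg[of t] neg[of 0] \<phi>(1)
    by (simp add: zero_less_divide_iff)
qed

lemma G_fn_less_half_pi_pi:
  assumes "pi / 2 < r" "r < pi" "0 \<le> t"
  shows "G_fn r t < ln (2 * (r_M * sin r_M) / pi)"
proof -
  obtain \<phi> where \<phi>: "\<phi> 0 = r" "\<And>s. pi / 2 < \<phi> s \<and> \<phi> s < pi"
    and deriv: "\<And>s. (\<phi> has_real_derivative f_vf (\<phi> s)) (at s)" and "r \<le> \<phi> t"
    using f_vf_solution_increasing[of "pi / 2" r pi] assms f_vf_zeros f_vf_pos_pi2_pi
      pi_less_3_2 pi_gt_zero by auto
  have pos: "0 < 1 * (\<phi> s * sin (\<phi> s))" for s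
    using \<phi>(2)[of s] sin_gt_zero[of "\<phi> s"] pi_gt_zero by simp
  define A where "A = \<phi> t * sin (\<phi> t)"
  define B where "B = r * sin r"
  define P where "P = r_M * sin r_M"
  have "0 < A" "0 < B"
    using pos[of t] pos[of 0] \<phi>(1) by (simp_all add: A_def B_def)
  have "A \<le> P"
    unfolding A_def P_def using \<phi>(2)[of t] pi_gt_zero by (intro x_mult_sin_le_peak) auto
  have "pi / 2 < P"
    using peak_bounds by (simp add: P_def)
  have "A / B < 2 * P / pi"
  proof (cases "r \<le> r_M")
    case True
    then have "pi / 2 < B"
      unfolding B_def using assms by (intro half_pi_less_x_mult_sin) auto
    have "A / B \<le> P / B"
      using \<open>A \<le> P\<close> \<open>0 < B\<close> by (simp add: divide_right_mono)
    also have "\<dots> < P / (pi / 2)"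
      by (intro divide_strict_left_mono mult_pos_pos)
         (use \<open>pi / 2 < B\<close> \<open>pi / 2 < P\<close> pi_gt_zero in linarith)+
    finally show ?thesis
      by (simp add: mult.commute)
  next
    case False
    then have "A \<le> B"
      unfolding A_def B_def using \<phi>(2)[of t] \<open>r \<le> \<phi> t\<close> pi_gt_zero
      by (intro x_mult_sin_antimono) auto
    then have "A / B \<le> 1"
      using \<open>0 < B\<close> by simp
    moreover have "1 < 2 * P / pi"
      using \<open>pi / 2 < P\<close> pi_gt_zero by (simp add: field_simps)
    ultimately show ?thesis
      by linarith
  qed
  moreover have "0 < A / B"
    using \<open>0 < A\<close> \<open>0 < B\<close> by simp
  ultimately have "ln (A / B) < ln (2 * P / pi)"
    by (subst ln_less_cancel_iff) auto
  then show ?thesis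
    using G_fn_eq_ln_ratio[OF \<phi>(1) deriv pos \<open>0 \<le> t\<close>] unfolding A_def B_def P_def by simp
qed

lemma G_fn_less_ln_peak:
  assumes "0 \<le> r" "r < 3 / 2 * pi" "0 \<le> t"
  shows "G_fn r t < ln (2 * r_M * sin r_M / pi)"
proof -
  have "1 < 2 * r_M * sin r_M / pi"
    using peak_bounds pi_gt_zero by (simp add: field_simps)
  then have ln_pos: "0 < ln (2 * r_M * sin r_M / pi)"
    by (rule ln_gt_zero)
  have at_zero: "G_fn r t \<le> 0" if "f_vf r = 0" "g_fn r \<le> 0"
    using G_fn_at_zero_of_f_vf[OF that(1) \<open>0 \<le> t\<close>] that(2) \<open>0 \<le> t\<close>
    by (simp add: mult_nonneg_nonpos)
  consider "r = 0" | "0 < r" "r < pi / 2" | "r = pi / 2" | "pi / 2 < r" "r < pi" | "r = pi"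
    | "pi < r"
    using assms by linarith
  then show ?thesis
  proof cases
    case 4
    then show ?thesis
      using G_fn_less_half_pi_pi[OF _ _ \<open>0 \<le> t\<close>] by (simp add: mult.assoc)
  qed (use assms ln_pos at_zero f_vf_zeros G_fn_nonpos_0_half_pi G_fn_nonpos_pi_3_half_pi
      in \<open>force simp: g_fn_def\<close>)+
qed

theorem mainTheorem7:
  fixes \<delta>\<^sub>0 :: real
  assumes "0 < \<delta>\<^sub>0" and "\<delta>\<^sub>0 < pi / 2"
  shows "(\<forall>r \<in> {0..<pi + \<delta>\<^sub>0}. \<forall>t \<ge> 0.
            G_fn r t < ln (2 * r_M * sin r_M / pi))
         \<and> ln (2 * r_M * sin r_M / pi) < ln (7 / 6)"
proof
  show "\<forall>r \<in> {0..<pi + \<delta>\<^sub>0}. \<forall>t \<ge> 0. G_fn r t < ln (2 * r_M * sin r_M / pi)"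
    using assms by (auto intro!: G_fn_less_ln_peak)
  have "1 < 2 * r_M * sin r_M / pi" "2 * r_M * sin r_M / pi < 7 / 6"
    using peak_bounds pi_gt_zero by (simp_all add: field_simps)
  then show "ln (2 * r_M * sin r_M / pi) < ln (7 / 6)"
    by (intro ln_less_cancel_iff[THEN iffD2]) linarith+
qed

end
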